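(* Let $\mathcal T$ be the Coons volume built from blending functions $F_0,F_1$ and boundary data $g$ (see context). Suppose there are constant vectors $\mathbf w_1,\mathbf w_2,\mathbf w_3\in\mathbb R^3$ such that opposite faces are translates of each other: $$g(1,v,w)=g(0,v,w)+\mathbf w_1,\quad g(u,1,w)=g(u,0,w)+\mathbf w_2,\quad g(u,v,1)=g(u,v,0)+\mathbf w_3\qquad\text{for all }u,v,w\in[0,1],$$ and that the images of each pair of opposite faces are disjoint. Define, for $(u,v,w)\in[0,1]^3$, $$\mathcal H_1=\partial_ug(u,0,w)+\partial_ug(u,v,0)-\partial_ug(u,1,1),\quad \mathcal H_2=\partial_vg(u,v,0)+\partial_vg(1,v,w)-\partial_vg(1,v,1),\quad \mathcal H_3=\partial_wg(1,v,w)+\partial_wg(u,0,w)-\partial_wg(1,1,w).$$ If there exists $\tau>0$ such that $\det[\mathcal H_1,\mathcal H_2,\mathcal H_3](u,v,w)>\tau$ for all $(u,v,w)\in[0,1]^3$, then $\mathcal T$ is regular, i.e. $\det[\partial_u\mathcal T,\partial_v\mathcal T,\partial_w\mathcal T]>0$ on $[0,1]^3$.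
   Context: Blending functions: $F_0,F_1:[0,1]\to\mathbb R$ are continuously differentiable with $F_0(t)+F_1(t)=1$ for all $t$, $F_0(0)=1$, $F_0(1)=0$ (hence $F_1(0)=0$, $F_1(1)=1$). Boundary data: $g:\partial([0,1]^3)\to\mathbb R^3$ is a map on the boundary of the unit cube whose restriction to each of the six closed faces is continuously differentiable as a function of the two free coordinates. Its values are written $g(a,v,w)$, $g(u,b,w)$, $g(u,v,c)$ with $a,b,c\in\{0,1\}$ and the remaining coordinates in $[0,1]$; on edges (e.g. $g(u,b,c)$) these are restrictions of $g$, and $\partial_u g(u,b,c)$ etc. denote derivatives along the edge. Coons volume: for $(u,v,w)\in[0,1]^3$, $$\mathcal T(u,v,w)=\sum_{a}F_a(u)g(a,v,w)+\sum_{b}F_b(v)g(u,b,w)+\sum_{c}F_c(w)g(u,v,c)-\sum_{a,b}F_a(u)F_b(v)g(a,b,w)-\sum_{b,c}F_b(v)F_c(w)g(u,b,c)-\sum_{a,c}F_a(u)F_c(w)g(a,v,c)+\sum_{a,b,c}F_a(u)F_b(v)F_c(w)g(a,b,c),$$ all sums over $a,b,c\in\{0,1\}$. $\mathcal T$ is called regular if its Jacobian determinant $\det[\partial_u\mathcal T,\partial_v\mathcal T,\partial_w\mathcal T]$ is strictly positive on $[0,1]^3$. *)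

theory Defs
  imports "HOL-Analysis.Analysis"
begin

definition C1_on :: "('a::euclidean_space \<Rightarrow> 'b::real_normed_vector) \<Rightarrow> 'a set \<Rightarrow> bool" where
  "C1_on f S \<longleftrightarrow> (\<exists>D :: 'a \<Rightarrow> ('a \<Rightarrow>\<^sub>L 'b).
      (\<forall>x\<in>S. (f has_derivative blinfun_apply (D x)) (at x within S)) \<and> continuous_on S D)"

abbreviation I01 :: "real set" where "I01 \<equiv> {0..1}"
abbreviation Sq01 :: "(real \<times> real) set" where "Sq01 \<equiv> {0..1} \<times> {0..1}"

definition blend :: "(real \<Rightarrow> real) \<Rightarrow> (real \<Rightarrow> real) \<Rightarrow> real \<Rightarrow> real \<Rightarrow> real" where
  "blend F0 F1 a t = (if a = 0 then F0 t else F1 t)"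

text \<open>The Coons volume. Boundary data g is given as a function of three real
  coordinates; only its values on the boundary of the unit cube enter.\<close>
definition coons ::
  "(real \<Rightarrow> real) \<Rightarrow> (real \<Rightarrow> real) \<Rightarrow> (real \<Rightarrow> real \<Rightarrow> real \<Rightarrow> real^3) \<Rightarrow> real \<Rightarrow> real \<Rightarrow> real \<Rightarrow> real^3" where
  "coons F0 F1 g u v w =
      (\<Sum>a\<in>{0,1}. blend F0 F1 a u *\<^sub>R g a v w)
    + (\<Sum>b\<in>{0,1}. blend F0 F1 b v *\<^sub>R g u b w)
    + (\<Sum>c\<in>{0,1}. blend F0 F1 c w *\<^sub>R g u v c)
    - (\<Sum>a\<in>{0,1}. \<Sum>b\<in>{0,1}. (blend F0 F1 a u * blend F0 F1 b v) *\<^sub>R g a b w)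
    - (\<Sum>b\<in>{0,1}. \<Sum>c\<in>{0,1}. (blend F0 F1 b v * blend F0 F1 c w) *\<^sub>R g u b c)
    - (\<Sum>a\<in>{0,1}. \<Sum>c\<in>{0,1}. (blend F0 F1 a u * blend F0 F1 c w) *\<^sub>R g a v c)
    + (\<Sum>a\<in>{0,1}. \<Sum>b\<in>{0,1}. \<Sum>c\<in>{0,1}.
         (blend F0 F1 a u * blend F0 F1 b v * blend F0 F1 c w) *\<^sub>R g a b c)"

definition pu :: "(real \<Rightarrow> real \<Rightarrow> real \<Rightarrow> 'a::real_normed_vector) \<Rightarrow> real \<Rightarrow> real \<Rightarrow> real \<Rightarrow> 'a" where
  "pu f u v w = vector_derivative (\<lambda>t. f t v w) (at u within I01)"
definition pv :: "(real \<Rightarrow> real \<Rightarrow> real \<Rightarrow> 'a::real_normed_vector) \<Rightarrow> real \<Rightarrow> real \<Rightarrow> real \<Rightarrow> 'a" where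
  "pv f u v w = vector_derivative (\<lambda>t. f u t w) (at v within I01)"
definition pw :: "(real \<Rightarrow> real \<Rightarrow> real \<Rightarrow> 'a::real_normed_vector) \<Rightarrow> real \<Rightarrow> real \<Rightarrow> real \<Rightarrow> 'a" where
  "pw f u v w = vector_derivative (\<lambda>t. f u v t) (at w within I01)"

definition det3 :: "real^3 \<Rightarrow> real^3 \<Rightarrow> real^3 \<Rightarrow> real" where
  "det3 a b c = det (\<chi> i j. (if j = (1::3) then a else if j = 2 then b else c) $ i)"

end

theory Submission
  imports Defs
begin

text \<open>If opposite faces of the boundary data are translates of each other, every blending term
  of the Coons volume cancels against a correction term, because F0 + F1 = 1. The volume is then a
  signed sum of face values without any blending, and in each coordinate direction it differs by a
  constant from exactly the three face terms whose derivatives make up H1, H2 and H3. Hence the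
  Jacobian of the volume is det [H1, H2, H3], which exceeds \<tau> > 0. Neither the disjointness of
  opposite faces nor the endpoint values or smoothness of the blending functions are needed.\<close>

lemma C1_on_differentiable_fst:
  fixes h :: "'a::euclidean_space \<Rightarrow> 'c::euclidean_space \<Rightarrow> 'b::real_normed_vector"
  assumes "C1_on (\<lambda>(x, y). h x y) (S \<times> T)" "x \<in> S" "y \<in> T"
  shows "(\<lambda>t. h t y) differentiable (at x within S)"
proof -
  obtain D where D: "\<forall>p\<in>S \<times> T. ((\<lambda>(x, y). h x y) has_derivative blinfun_apply (D p)) (at p within S \<times> T)"
    using assms(1) unfolding C1_on_def by blast
  have "((\<lambda>t. (\<lambda>(x, y). h x y) (t, y)) has_derivative (\<lambda>z. D (x, y) (z, 0))) (at x within S)"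
    by (rule has_derivative_in_compose2[where t = "S \<times> T" and g' = "\<lambda>p. blinfun_apply (D p)"])
      (use D in blast, use assms in \<open>auto intro!: derivative_eq_intros\<close>)
  then show ?thesis
    unfolding differentiable_def by auto
qed

lemma C1_on_differentiable_snd:
  fixes h :: "'a::euclidean_space \<Rightarrow> 'c::euclidean_space \<Rightarrow> 'b::real_normed_vector"
  assumes "C1_on (\<lambda>(x, y). h x y) (S \<times> T)" "x \<in> S" "y \<in> T"
  shows "(\<lambda>t. h x t) differentiable (at y within T)"
proof -
  obtain D where D: "\<forall>p\<in>S \<times> T. ((\<lambda>(x, y). h x y) has_derivative blinfun_apply (D p)) (at p within S \<times> T)"
    using assms(1) unfolding C1_on_def by blast
  have "((\<lambda>t. (\<lambda>(x, y). h x y) (x, t)) has_derivative (\<lambda>z. D (x, y) (0, z))) (at y within T)"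
    by (rule has_derivative_in_compose2[where t = "S \<times> T" and g' = "\<lambda>p. blinfun_apply (D p)"])
      (use D in blast, use assms in \<open>auto intro!: derivative_eq_intros\<close>)
  then show ?thesis
    unfolding differentiable_def by auto
qed

lemma has_vector_derivative_add_diff_const_within:
  fixes f a b c :: "real \<Rightarrow> 'b::real_normed_vector"
  assumes "a differentiable (at x within S)" "b differentiable (at x within S)"
    "c differentiable (at x within S)" "x \<in> S"
    and f_eq: "\<And>t. t \<in> S \<Longrightarrow> f t = a t + b t - c t + k"
  shows "(f has_vector_derivative vector_derivative a (at x within S)
            + vector_derivative b (at x within S) - vector_derivative c (at x within S)) (at x within S)"
proof -
  have "((\<lambda>t. a t + b t - c t + k) has_vector_derivative vector_derivative a (at x within S)
          + vector_derivative b (at x within S) - vector_derivative c (at x within S)) (at x within S)"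
    using assms(1-3) by (auto intro!: derivative_eq_intros simp: vector_derivative_works)
  then show ?thesis
    by (rule has_vector_derivative_transform_within[where d = 1]) (use assms(4) f_eq in auto)
qed

locale translational_boundary =
  fixes g :: "real \<Rightarrow> real \<Rightarrow> real \<Rightarrow> real^3" and w1 w2 w3 :: "real^3"
  assumes faces_C1:
      "\<forall>a\<in>{0,1}. C1_on (\<lambda>(v,w). g a v w) Sq01"
      "\<forall>b\<in>{0,1}. C1_on (\<lambda>(u,w). g u b w) Sq01"
      "\<forall>c\<in>{0,1}. C1_on (\<lambda>(u,v). g u v c) Sq01"
    and transl1: "\<forall>v\<in>I01. \<forall>w\<in>I01. g 1 v w = g 0 v w + w1"
    and transl2: "\<forall>u\<in>I01. \<forall>w\<in>I01. g u 1 w = g u 0 w + w2"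
    and transl3: "\<forall>u\<in>I01. \<forall>v\<in>I01. g u v 1 = g u v 0 + w3"
begin

lemma g_translate:
  "v \<in> I01 \<Longrightarrow> w \<in> I01 \<Longrightarrow> g 1 v w = g 0 v w + w1"
  "u \<in> I01 \<Longrightarrow> w \<in> I01 \<Longrightarrow> g u 1 w = g u 0 w + w2"
  "u \<in> I01 \<Longrightarrow> v \<in> I01 \<Longrightarrow> g u v 1 = g u v 0 + w3"
  using transl1 transl2 transl3 by blast+

lemma differentiable_along_faces:
  assumes "a \<in> {0,1}" "x \<in> I01" "y \<in> I01"
  shows "(\<lambda>t. g t a y) differentiable (at x within I01)"
    and "(\<lambda>t. g t y a) differentiable (at x within I01)"
    and "(\<lambda>t. g a t y) differentiable (at x within I01)"
    and "(\<lambda>t. g y t a) differentiable (at x within I01)"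
    and "(\<lambda>t. g a y t) differentiable (at x within I01)"
    and "(\<lambda>t. g y a t) differentiable (at x within I01)"
  using assms faces_C1
  by (auto intro: C1_on_differentiable_fst[where h = "\<lambda>x y. g x _ y"]
                  C1_on_differentiable_fst[where h = "\<lambda>x y. g x y _"]
                  C1_on_differentiable_fst[where h = "\<lambda>x y. g _ x y"]
                  C1_on_differentiable_snd[where h = "\<lambda>x y. g x _ y"]
                  C1_on_differentiable_snd[where h = "\<lambda>x y. g x y _"]
                  C1_on_differentiable_snd[where h = "\<lambda>x y. g _ x y"])

context
  fixes F0 F1 :: "real \<Rightarrow> real"
  assumes F_sum: "\<forall>t\<in>I01. F0 t + F1 t = 1"
begin

lemma coons_eq_face_sum:
  assumes "u \<in> I01" "v \<in> I01" "w \<in> I01"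
  shows "coons F0 F1 g u v w
           = g 0 v w + g u 0 w + g u v 0 - g 0 0 w - g u 0 0 - g 0 v 0 + g 0 0 0"
proof -
  have "F0 t = 1 - F1 t" if "t \<in> I01" for t
    using F_sum that by (simp add: eq_diff_eq)
  then show ?thesis
    unfolding coons_def blend_def using assms
    by (simp add: g_translate) (simp add: vec_eq_iff algebra_simps)
qed

lemma coons_has_vector_derivative_u:
  assumes "u \<in> I01" "v \<in> I01" "w \<in> I01"
  shows "((\<lambda>t. coons F0 F1 g t v w) has_vector_derivative pu g u 0 w + pu g u v 0 - pu g u 1 1)
           (at u within I01)"
  unfolding pu_def
  by (rule has_vector_derivative_add_diff_const_within
        [where k = "g 0 v w - g 0 0 w - g 0 v 0 + g 0 0 0 + w2 + w3"])
    (use assms in \<open>auto intro: differentiable_along_faces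
                      simp: coons_eq_face_sum g_translate algebra_simps\<close>)

lemma coons_has_vector_derivative_v:
  assumes "u \<in> I01" "v \<in> I01" "w \<in> I01"
  shows "((\<lambda>t. coons F0 F1 g u t w) has_vector_derivative pv g u v 0 + pv g 1 v w - pv g 1 v 1)
           (at v within I01)"
  unfolding pv_def
  by (rule has_vector_derivative_add_diff_const_within
        [where k = "g u 0 w - g 0 0 w - g u 0 0 + g 0 0 0 + w3"])
    (use assms in \<open>auto intro: differentiable_along_faces
                      simp: coons_eq_face_sum g_translate algebra_simps\<close>)

lemma coons_has_vector_derivative_w:
  assumes "u \<in> I01" "v \<in> I01" "w \<in> I01"
  shows "((\<lambda>t. coons F0 F1 g u v t) has_vector_derivative pw g 1 v w + pw g u 0 w - pw g 1 1 w)
           (at w within I01)"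
  unfolding pw_def
  by (rule has_vector_derivative_add_diff_const_within
        [where k = "g u v 0 - g u 0 0 - g 0 v 0 + g 0 0 0 + w2"])
    (use assms in \<open>auto intro: differentiable_along_faces
                      simp: coons_eq_face_sum g_translate algebra_simps\<close>)

lemma coons_partials:
  assumes "u \<in> I01" "v \<in> I01" "w \<in> I01"
  shows "pu (coons F0 F1 g) u v w = pu g u 0 w + pu g u v 0 - pu g u 1 1"
    and "pv (coons F0 F1 g) u v w = pv g u v 0 + pv g 1 v w - pv g 1 v 1"
    and "pw (coons F0 F1 g) u v w = pw g 1 v w + pw g u 0 w - pw g 1 1 w"
  using vector_derivative_within_closed_interval[OF _ _ coons_has_vector_derivative_u[OF assms]]
    vector_derivative_within_closed_interval[OF _ _ coons_has_vector_derivative_v[OF assms]]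
    vector_derivative_within_closed_interval[OF _ _ coons_has_vector_derivative_w[OF assms]]
    assms
  by (simp_all add: pu_def pv_def pw_def)

end

end

theorem corollary1:
  fixes F0 F1 :: "real \<Rightarrow> real" and g :: "real \<Rightarrow> real \<Rightarrow> real \<Rightarrow> real^3"
    and w1 w2 w3 :: "real^3" and \<tau> :: real
  assumes F0_C1: "C1_on F0 I01" and F1_C1: "C1_on F1 I01"
    and F_sum: "\<forall>t\<in>I01. F0 t + F1 t = 1"
    and F0_0: "F0 0 = 1" and F0_1: "F0 1 = 0"
    and g_faces_C1:
      "\<forall>a\<in>{0,1}. C1_on (\<lambda>(v,w). g a v w) Sq01"
      "\<forall>b\<in>{0,1}. C1_on (\<lambda>(u,w). g u b w) Sq01"
      "\<forall>c\<in>{0,1}. C1_on (\<lambda>(u,v). g u v c) Sq01"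
    and transl1: "\<forall>v\<in>I01. \<forall>w\<in>I01. g 1 v w = g 0 v w + w1"
    and transl2: "\<forall>u\<in>I01. \<forall>w\<in>I01. g u 1 w = g u 0 w + w2"
    and transl3: "\<forall>u\<in>I01. \<forall>v\<in>I01. g u v 1 = g u v 0 + w3"
    and disj1: "(\<lambda>(v,w). g 0 v w) ` Sq01 \<inter> (\<lambda>(v,w). g 1 v w) ` Sq01 = {}"
    and disj2: "(\<lambda>(u,w). g u 0 w) ` Sq01 \<inter> (\<lambda>(u,w). g u 1 w) ` Sq01 = {}"
    and disj3: "(\<lambda>(u,v). g u v 0) ` Sq01 \<inter> (\<lambda>(u,v). g u v 1) ` Sq01 = {}"
    and tau_pos: "\<tau> > 0"
    and H_det: "\<forall>u\<in>I01. \<forall>v\<in>I01. \<forall>w\<in>I01.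
       det3 (pu g u 0 w + pu g u v 0 - pu g u 1 1)
            (pv g u v 0 + pv g 1 v w - pv g 1 v 1)
            (pw g 1 v w + pw g u 0 w - pw g 1 1 w) > \<tau>"
  shows "\<forall>u\<in>I01. \<forall>v\<in>I01. \<forall>w\<in>I01.
           (\<lambda>t. coons F0 F1 g t v w) differentiable (at u within I01) \<and>
           (\<lambda>t. coons F0 F1 g u t w) differentiable (at v within I01) \<and>
           (\<lambda>t. coons F0 F1 g u v t) differentiable (at w within I01) \<and>
           det3 (pu (coons F0 F1 g) u v w) (pv (coons F0 F1 g) u v w) (pw (coons F0 F1 g) u v w) > 0"
proof -
  interpret translational_boundary g w1 w2 w3
    using g_faces_C1 transl1 transl2 transl3 by unfold_locales
  show ?thesis
    using coons_partials[OF F_sum] H_det tau_pos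
    by (auto intro: differentiableI_vector[OF coons_has_vector_derivative_u[OF F_sum]]
                    differentiableI_vector[OF coons_has_vector_derivative_v[OF F_sum]]
                    differentiableI_vector[OF coons_has_vector_derivative_w[OF F_sum]] less_trans)
qed

end
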